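(* Let $p,q\ge 1$ and let $M$ be a real $(p+q)\times(p+q)$ matrix of the form $$M=\begin{pmatrix}A&O\\ H&B\end{pmatrix}\quad\text{or}\quad M=\begin{pmatrix}A&H\\ O&B\end{pmatrix},$$ where $A$ is a $p\times p$ positive definite symmetric matrix, $B$ is a $q\times q$ negative definite symmetric matrix, $O$ is a zero block and $H$ is an arbitrary real matrix of the appropriate size. Then $M^{-1}M^{T}$ is conjugate in $GL(p+q,\mathbb R)$ to a symmetric matrix. Consequently the characteristic polynomial of $M^{-1}M^T$ has only real zeros. *)

theory Defs
  imports Jordan_Normal_Form.Matrix Jordan_Normal_Form.Char_Poly
begin

definition sym_mat :: "real mat \<Rightarrow> nat \<Rightarrow> bool" where
  "sym_mat A n \<longleftrightarrow> A \<in> carrier_mat n n \<and> transpose_mat A = A"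

definition pos_def_mat :: "real mat \<Rightarrow> nat \<Rightarrow> bool" where
  "pos_def_mat A n \<longleftrightarrow> sym_mat A n \<and>
     (\<forall>v \<in> carrier_vec n. v \<noteq> 0\<^sub>v n \<longrightarrow> v \<bullet> (A *\<^sub>v v) > 0)"

definition neg_def_mat :: "real mat \<Rightarrow> nat \<Rightarrow> bool" where
  "neg_def_mat A n \<longleftrightarrow> sym_mat A n \<and>
     (\<forall>v \<in> carrier_vec n. v \<noteq> 0\<^sub>v n \<longrightarrow> v \<bullet> (A *\<^sub>v v) < 0)"

text \<open>The inverse of a square matrix (meaningful when it is invertible).\<close>
definition mat_inv :: "real mat \<Rightarrow> real mat" where
  "mat_inv M = (SOME N. N \<in> carrier_mat (dim_row M) (dim_row M) \<and>
                        M * N = 1\<^sub>m (dim_row M) \<and> N * M = 1\<^sub>m (dim_row M))"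

end

theory Submission
  imports Defs
begin

(*
  With G = diag(A, -B), which is positive definite, M factors as M = K * G (lower triangular case)
  or M = G * K (upper triangular case), where K is an involution: K * K = 1.  For N = M^-1 * M^T
  one then finds a positive definite W with W * N symmetric (W = G, resp. W = K^T * G * K).
  A Cholesky-type factorization W = P^T * P, P invertible, turns this into the symmetric matrix
  P * N * P^-1, so N is similar to a symmetric matrix; and similar matrices share their
  characteristic polynomial, whose roots are real for a real symmetric matrix.
*)

section \<open>Real symmetric matrices have real eigenvalues\<close>

lemma sym_matD:
  assumes "sym_mat S n"
  shows "S \<in> carrier_mat n n" and "i < n \<Longrightarrow> j < n \<Longrightarrow> S $$ (i, j) = S $$ (j, i)"
proof -
  show Sc: "S \<in> carrier_mat n n" using assms unfolding sym_mat_def by auto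
  assume "i < n" "j < n"
  then show "S $$ (i, j) = S $$ (j, i)"
    using assms Sc unfolding sym_mat_def by (metis carrier_matD index_transpose_mat(1))
qed

lemma sym_mat_hermitian_form_real:
  fixes S :: "real mat" and v :: "complex vec"
  assumes S: "sym_mat S n"
  shows "(\<Sum>i<n. \<Sum>j<n. cnj (v $ i) * of_real (S $$ (i, j)) * v $ j) \<in> \<real>" (is "?q \<in> \<real>")
proof -
  have "cnj ?q = (\<Sum>i<n. \<Sum>j<n. v $ i * of_real (S $$ (i, j)) * cnj (v $ j))"
    by (simp add: cnj_sum)
  also have "\<dots> = (\<Sum>j<n. \<Sum>i<n. v $ i * of_real (S $$ (i, j)) * cnj (v $ j))"
    by (rule sum.swap)
  also have "\<dots> = ?q"
    by (intro sum.cong refl) (simp add: sym_matD(2)[OF S] mult_ac)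
  finally show ?thesis by (simp add: Reals_cnj_iff)
qed

text \<open>Real symmetric matrices have only real eigenvalues: for an eigenvector \<open>v\<close> with
  eigenvalue \<open>z\<close>, the Hermitian form at \<open>v\<close> equals \<open>z * \<parallel>v\<parallel>\<^sup>2\<close> and is real.\<close>

lemma sym_mat_real_eigenvalues:
  fixes S :: "real mat"
  assumes S: "sym_mat S n" and z: "poly (map_poly complex_of_real (char_poly S)) z = 0"
  shows "z \<in> \<real>"
proof -
  let ?S = "map_mat complex_of_real S"
  have Sc: "S \<in> carrier_mat n n" by (rule sym_matD(1)[OF S])
  have "char_poly ?S = map_poly complex_of_real (char_poly S)"
    by (rule of_real_hom.char_poly_hom[OF Sc])
  with z Sc obtain v where v: "v \<in> carrier_vec n" "v \<noteq> 0\<^sub>v n" "?S *\<^sub>v v = z \<cdot>\<^sub>v v"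
    using eigenvalue_root_char_poly[of ?S n z] unfolding eigenvalue_def eigenvector_def by auto
  have row: "(\<Sum>j<n. of_real (S $$ (i, j)) * v $ j) = z * v $ i" if "i < n" for i
    using arg_cong[OF v(3), of "\<lambda>w. w $ i"] that v(1) Sc
    by (auto simp: scalar_prod_def atLeast0LessThan)
  define r where "r = (\<Sum>i<n. (cmod (v $ i))\<^sup>2)"
  have "(\<Sum>i<n. \<Sum>j<n. cnj (v $ i) * of_real (S $$ (i, j)) * v $ j)
      = (\<Sum>i<n. cnj (v $ i) * (z * v $ i))"
    using row by (simp add: sum_distrib_left[symmetric] mult.assoc)
  also have "\<dots> = z * of_real r"
    unfolding r_def of_real_sum complex_norm_square sum_distrib_left by (simp add: mult_ac)
  finally have real: "z * of_real r \<in> \<real>"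
    using sym_mat_hermitian_form_real[OF S, of v] by simp
  have "r > 0"
  proof -
    obtain i where i: "i < n" "v $ i \<noteq> 0"
      using v(1,2) by (metis eq_vecI carrier_vecD index_zero_vec(1,2))
    then have "0 < (cmod (v $ i))\<^sup>2" by simp
    also have "\<dots> \<le> r" unfolding r_def by (rule member_le_sum) (use i in auto)
    finally show ?thesis .
  qed
  then have "z = (z * of_real r) / of_real r" by simp
  also have "\<dots> \<in> \<real>" by (rule Reals_divide[OF real Reals_of_real])
  finally show ?thesis .
qed

section \<open>Positive definite matrices\<close>

lemma pos_def_matD:
  assumes "pos_def_mat A n"
  shows "A \<in> carrier_mat n n" "transpose_mat A = A"
    "v \<in> carrier_vec n \<Longrightarrow> v \<noteq> 0\<^sub>v n \<Longrightarrow> v \<bullet> (A *\<^sub>v v) > 0"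
  using assms unfolding pos_def_mat_def sym_mat_def by auto

lemma neg_def_uminus_pos_def: "neg_def_mat B n \<Longrightarrow> pos_def_mat (- B) n"
  unfolding neg_def_mat_def pos_def_mat_def sym_mat_def by (auto simp: transpose_uminus)

lemma quad_form_congruence:
  fixes P A :: "real mat"
  assumes P: "P \<in> carrier_mat n m" and A: "A \<in> carrier_mat n n" and v: "v \<in> carrier_vec m"
  shows "v \<bullet> ((transpose_mat P * A * P) *\<^sub>v v) = (P *\<^sub>v v) \<bullet> (A *\<^sub>v (P *\<^sub>v v))"
proof -
  have Pt: "transpose_mat P \<in> carrier_mat m n" using P by simp
  have "(transpose_mat P * A * P) *\<^sub>v v = (transpose_mat P * A) *\<^sub>v (P *\<^sub>v v)"
    by (rule assoc_mult_mat_vec) (use P A v in auto)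
  also have "\<dots> = transpose_mat P *\<^sub>v (A *\<^sub>v (P *\<^sub>v v))"
    by (rule assoc_mult_mat_vec) (use P A v in auto)
  finally have "v \<bullet> ((transpose_mat P * A * P) *\<^sub>v v) = (transpose_mat P *\<^sub>v (A *\<^sub>v (P *\<^sub>v v))) \<bullet> v"
    using P A v by (simp add: comm_scalar_prod[of v m])
  also have "\<dots> = (A *\<^sub>v (P *\<^sub>v v)) \<bullet> (P *\<^sub>v v)"
    by (rule transpose_vec_mult_scalar[OF P v]) (use P A v in auto)
  also have "\<dots> = (P *\<^sub>v v) \<bullet> (A *\<^sub>v (P *\<^sub>v v))"
    by (rule comm_scalar_prod[of _ n]) (use P A v in auto)
  finally show ?thesis .
qed

lemma pos_def_congruence:
  fixes P Q :: "real mat"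
  assumes A: "pos_def_mat A n" and P: "P \<in> carrier_mat n m" and Q: "Q \<in> carrier_mat m n"
    and QP: "Q * P = 1\<^sub>m m"
  shows "pos_def_mat (transpose_mat P * A * P) m"
proof -
  note Ac = pos_def_matD(1)[OF A]
  have "transpose_mat (transpose_mat P * A * P) = transpose_mat P * transpose_mat A * P"
    using P Ac by (simp add: transpose_mult[of _ m n _ m] transpose_mult[of _ m n _ n] transpose_mult[of _ n n _ m]
        assoc_mult_mat[of _ m n _ n _ m])
  then have sym: "transpose_mat (transpose_mat P * A * P) = transpose_mat P * A * P"
    using pos_def_matD(2)[OF A] by simp
  have pos: "v \<bullet> ((transpose_mat P * A * P) *\<^sub>v v) > 0"
    if v: "v \<in> carrier_vec m" "v \<noteq> 0\<^sub>v m" for v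
  proof -
    have "P *\<^sub>v v \<noteq> 0\<^sub>v n"
    proof
      assume "P *\<^sub>v v = 0\<^sub>v n"
      then have "Q *\<^sub>v (P *\<^sub>v v) = 0\<^sub>v m"
        using Q by (auto intro!: eq_vecI simp: scalar_prod_def)
      moreover have "Q *\<^sub>v (P *\<^sub>v v) = v"
        using Q P v QP by (simp add: assoc_mult_mat_vec[symmetric])
      ultimately show False using v by simp
    qed
    then show ?thesis
      unfolding quad_form_congruence[OF P Ac v(1)] using pos_def_matD(3)[OF A] P v(1) by auto
  qed
  show ?thesis unfolding pos_def_mat_def sym_mat_def using P Ac sym pos by auto
qed

lemma sym_four_block_mat:
  fixes a b c d :: "real mat"
  assumes a: "a \<in> carrier_mat k k" and b: "b \<in> carrier_mat k m"
    and c: "c \<in> carrier_mat m k" and d: "d \<in> carrier_mat m m"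
    and sym: "sym_mat (four_block_mat a b c d) (k + m)"
  shows "c = transpose_mat b" and "sym_mat d m"
proof -
  let ?F = "four_block_mat a b c d"
  have F: "?F $$ (i, j) = ?F $$ (j, i)" if "i < k + m" "j < k + m" for i j
    using sym_matD(2)[OF sym that] .
  show "c = transpose_mat b"
  proof (rule eq_matI)
    fix i j assume "i < dim_row (transpose_mat b)" "j < dim_col (transpose_mat b)"
    then show "c $$ (i, j) = transpose_mat b $$ (i, j)"
      using F[of "k + i" j] a b c d by auto
  qed (use b c in auto)
  have "transpose_mat d = d"
  proof (rule eq_matI)
    fix i j assume "i < dim_row d" "j < dim_col d"
    then show "transpose_mat d $$ (i, j) = d $$ (i, j)"
      using F[of "k + i" "k + j"] a b c d by auto
  qed (use d in auto)
  then show "sym_mat d m" unfolding sym_mat_def using d by auto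
qed

lemma pos_def_trailing_block:
  fixes a b c d :: "real mat"
  assumes a: "a \<in> carrier_mat k k" and b: "b \<in> carrier_mat k m"
    and c: "c \<in> carrier_mat m k" and d: "d \<in> carrier_mat m m"
    and pd: "pos_def_mat (four_block_mat a b c d) (k + m)"
  shows "pos_def_mat d m"
proof -
  have "sym_mat d m"
    using sym_four_block_mat(2)[OF a b c d] pd unfolding pos_def_mat_def by auto
  moreover have "w \<bullet> (d *\<^sub>v w) > 0" if w: "w \<in> carrier_vec m" "w \<noteq> 0\<^sub>v m" for w
  proof -
    let ?v = "0\<^sub>v k @\<^sub>v w"
    have c0: "c *\<^sub>v 0\<^sub>v k = 0\<^sub>v m" using c by (auto intro!: eq_vecI)
    have "?v \<noteq> 0\<^sub>v (k + m)"
    proof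
      assume v0: "?v = 0\<^sub>v (k + m)"
      have "w = 0\<^sub>v m"
      proof (rule eq_vecI)
        fix i assume "i < dim_vec (0\<^sub>v m :: real vec)"
        with arg_cong[OF v0, of "\<lambda>u. u $ (k + i)"] w show "w $ i = 0\<^sub>v m $ i" by auto
      qed (use w in auto)
      with w show False by simp
    qed
    then have "0 < ?v \<bullet> (four_block_mat a b c d *\<^sub>v ?v)"
      using pos_def_matD(3)[OF pd] w by auto
    also have "four_block_mat a b c d *\<^sub>v ?v = (a *\<^sub>v 0\<^sub>v k + b *\<^sub>v w) @\<^sub>v (c *\<^sub>v 0\<^sub>v k + d *\<^sub>v w)"
      by (rule four_block_mat_mult_vec[OF a b c d]) (use w in auto)
    also have "?v \<bullet> \<dots> = 0\<^sub>v k \<bullet> (a *\<^sub>v 0\<^sub>v k + b *\<^sub>v w) + w \<bullet> (c *\<^sub>v 0\<^sub>v k + d *\<^sub>v w)"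
      by (rule scalar_prod_append[of _ k _ m]) (use a b c d w in auto)
    also have "\<dots> = w \<bullet> (d *\<^sub>v w)"
      using a b d w c0 by simp
    finally show ?thesis .
  qed
  ultimately show ?thesis unfolding pos_def_mat_def by auto
qed

lemma pos_def_nonneg:
  assumes "pos_def_mat A n" and "v \<in> carrier_vec n"
  shows "v \<bullet> (A *\<^sub>v v) \<ge> 0"
  using assms pos_def_matD[OF assms(1)] by (cases "v = 0\<^sub>v n") (auto intro: less_imp_le)

lemma pos_def_block_diag:
  fixes A B :: "real mat"
  assumes A: "pos_def_mat A p" and B: "pos_def_mat B q"
  shows "pos_def_mat (four_block_mat A (0\<^sub>m p q) (0\<^sub>m q p) B) (p + q)"
proof -
  note Ac = pos_def_matD(1)[OF A] and Bc = pos_def_matD(1)[OF B]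
  let ?G = "four_block_mat A (0\<^sub>m p q) (0\<^sub>m q p) B"
  have "transpose_mat ?G = ?G"
    using Ac Bc pos_def_matD(2)[OF A] pos_def_matD(2)[OF B]
    by (simp add: transpose_four_block_mat[of _ p p _ q _ q])
  moreover have "v \<bullet> (?G *\<^sub>v v) > 0" if v: "v \<in> carrier_vec (p + q)" "v \<noteq> 0\<^sub>v (p + q)" for v
  proof -
    define v1 v2 where "v1 = vec_first v p" and "v2 = vec_last v q"
    have v12: "v = v1 @\<^sub>v v2" and carr: "v1 \<in> carrier_vec p" "v2 \<in> carrier_vec q"
      unfolding v1_def v2_def using v(1) by auto
    have "v \<bullet> (?G *\<^sub>v v) = v1 \<bullet> (A *\<^sub>v v1) + v2 \<bullet> (B *\<^sub>v v2)"
      unfolding v12 mult_mat_vec_split[OF Ac Bc carr]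
      by (rule scalar_prod_append[of _ p _ q]) (use Ac Bc carr in auto)
    moreover have "v1 \<noteq> 0\<^sub>v p \<or> v2 \<noteq> 0\<^sub>v q"
      using v v12 by auto
    ultimately show ?thesis
      using pos_def_matD(3)[OF A] pos_def_matD(3)[OF B] pos_def_nonneg[OF A] pos_def_nonneg[OF B] carr
      by (smt (verit))
  qed
  ultimately show ?thesis unfolding pos_def_mat_def sym_mat_def using Ac Bc by auto
qed

section \<open>The factorization \<open>A = P\<^sup>T * P\<close> of a positive definite matrix\<close>

text \<open>One step of symmetric Gaussian elimination: a unipotent congruence clears the first row and
  column of a positive definite matrix, leaving a positive pivot and a positive definite block.\<close>

lemma pos_def_pivot_elimination:
  fixes A :: "real mat"
  assumes A: "pos_def_mat A (Suc m)"
  obtains L Li \<alpha> S where "L \<in> carrier_mat (Suc m) (Suc m)" "Li \<in> carrier_mat (Suc m) (Suc m)"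
    "L * Li = 1\<^sub>m (Suc m)" "Li * L = 1\<^sub>m (Suc m)" "\<alpha> > 0" "pos_def_mat S m"
    "transpose_mat L * A * L = four_block_mat (mat 1 1 (\<lambda>_. \<alpha>)) (0\<^sub>m 1 m) (0\<^sub>m m 1) S"
proof -
  note Ac = pos_def_matD(1)[OF A]
  define \<alpha> where "\<alpha> = A $$ (0, 0)"
  have "unit_vec (Suc m) 0 \<noteq> (0\<^sub>v (Suc m) :: real vec)"
  proof
    assume "unit_vec (Suc m) 0 = (0\<^sub>v (Suc m) :: real vec)"
    from arg_cong[OF this, of "\<lambda>v. v $ 0"] show False by simp
  qed
  from pos_def_matD(3)[OF A _ this] Ac have \<alpha>: "\<alpha> > 0" unfolding \<alpha>_def by simp
  obtain a b c C where sb: "split_block A 1 1 = (a, b, c, C)" by (cases "split_block A 1 1")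
  have "dim_row A = 1 + m" "dim_col A = 1 + m" using Ac by auto
  note blocks = split_block[OF sb this]
  have a: "a \<in> carrier_mat 1 1" and b: "b \<in> carrier_mat 1 m" and c: "c \<in> carrier_mat m 1"
    and C: "C \<in> carrier_mat m m" and A_blocks: "A = four_block_mat a b c C" using blocks by auto
  have a_eq: "a = mat 1 1 (\<lambda>_. \<alpha>)"
    using sb unfolding split_block_def Let_def \<alpha>_def by (auto intro!: eq_matI)
  define x where "x = (- (1 / \<alpha>)) \<cdot>\<^sub>m b"
  have x: "x \<in> carrier_mat 1 m" using b unfolding x_def by auto
  have pivot: "a * x + b = 0\<^sub>m 1 m"
    using x b \<alpha> unfolding a_eq x_def by (auto intro!: eq_matI simp: scalar_prod_def)
  define L where "L = four_block_mat (1\<^sub>m 1) x (0\<^sub>m m 1) (1\<^sub>m m)"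
  define Li where "Li = four_block_mat (1\<^sub>m 1) (- x) (0\<^sub>m m 1) (1\<^sub>m m)"
  have L: "L \<in> carrier_mat (Suc m) (Suc m)" and Li: "Li \<in> carrier_mat (Suc m) (Suc m)"
    unfolding L_def Li_def using x by auto
  have LLi: "L * Li = 1\<^sub>m (Suc m)"
  proof -
    have "- 0\<^sub>m m m = (0\<^sub>m m m :: real mat)" by (auto intro!: eq_matI)
    then show ?thesis unfolding L_def Li_def using x four_block_one_mat[of 1 m]
      by (simp add: mult_four_block_mat[of _ 1 1 _ m _ m _ _ 1 _ m])
  qed
  have LiL: "Li * L = 1\<^sub>m (Suc m)" by (rule mat_mult_left_right_inverse[OF L Li LLi])
  define D where "D = transpose_mat L * A * L"
  have D: "pos_def_mat D (1 + m)"
    unfolding D_def using pos_def_congruence[OF A L Li LiL] by simp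
  define d where "d = transpose_mat x * a + c"
  define S where "S = d * x + (transpose_mat x * b + C)"
  have d: "d \<in> carrier_mat m 1" and S: "S \<in> carrier_mat m m"
    unfolding S_def d_def using x a b c C by auto
  have "transpose_mat L = four_block_mat (1\<^sub>m 1) (0\<^sub>m 1 m) (transpose_mat x) (1\<^sub>m m)"
    unfolding L_def using x by (simp add: transpose_four_block_mat[of _ 1 1 _ m _ m])
  then have D_blocks: "D = four_block_mat a (0\<^sub>m 1 m) d S"
    unfolding D_def A_blocks L_def d_def S_def using x a b c C pivot
    by (simp add: mult_four_block_mat[of _ 1 1 _ m _ m _ _ 1 _ m])
  have "sym_mat (four_block_mat a (0\<^sub>m 1 m) d S) (1 + m)"
    using D unfolding D_blocks pos_def_mat_def by auto
  from sym_four_block_mat(1)[OF a zero_carrier_mat d S this] have "d = 0\<^sub>m m 1" by simp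
  then have "transpose_mat L * A * L = four_block_mat (mat 1 1 (\<lambda>_. \<alpha>)) (0\<^sub>m 1 m) (0\<^sub>m m 1) S"
    using D_blocks a_eq unfolding D_def by simp
  moreover have "pos_def_mat S m"
    using pos_def_trailing_block[OF a zero_carrier_mat d S] D unfolding D_blocks by auto
  ultimately show thesis using that L Li LLi LiL \<alpha> by blast
qed

lemma congruence_transfers_factorization:
  fixes A L Li T Ti :: "real mat"
  assumes A: "A \<in> carrier_mat n n" and L: "L \<in> carrier_mat n n" and Li: "Li \<in> carrier_mat n n"
    and T: "T \<in> carrier_mat n n" and Ti: "Ti \<in> carrier_mat n n"
    and LLi: "L * Li = 1\<^sub>m n" and LiL: "Li * L = 1\<^sub>m n" and TTi: "T * Ti = 1\<^sub>m n"
    and LAL: "transpose_mat L * A * L = transpose_mat T * T"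
  shows "(T * Li) * (L * Ti) = 1\<^sub>m n" and "A = transpose_mat (T * Li) * (T * Li)"
proof -
  have "(T * Li) * (L * Ti) = T * (Li * L) * Ti"
    using T Li L Ti by (simp add: assoc_mult_mat[of _ n n _ n _ n])
  then show "(T * Li) * (L * Ti) = 1\<^sub>m n" using LiL TTi T by simp
  have Lt: "transpose_mat Li * transpose_mat L = 1\<^sub>m n"
    using LLi L Li by (metis transpose_mult transpose_one)
  have "transpose_mat (T * Li) * (T * Li) = transpose_mat Li * (transpose_mat T * T) * Li"
    using T Li by (simp add: transpose_mult[of _ n n _ n] assoc_mult_mat[of _ n n _ n _ n])
  also have "\<dots> = (transpose_mat Li * transpose_mat L) * A * (L * Li)"
    unfolding LAL[symmetric] using L Li A by (simp add: assoc_mult_mat[of _ n n _ n _ n])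
  also have "\<dots> = A" using Lt LLi A by simp
  finally show "A = transpose_mat (T * Li) * (T * Li)" ..
qed

lemma pos_def_factorization:
  fixes A :: "real mat"
  assumes "pos_def_mat A n"
  shows "\<exists>P Q. P \<in> carrier_mat n n \<and> Q \<in> carrier_mat n n \<and> P * Q = 1\<^sub>m n \<and>
    A = transpose_mat P * P"
  using assms
proof (induction n arbitrary: A)
  case 0
  then have "A = transpose_mat (1\<^sub>m 0) * 1\<^sub>m 0"
    by (auto intro!: eq_matI dest: pos_def_matD(1))
  then show ?case by (intro exI[of _ "1\<^sub>m 0"]) auto
next
  case (Suc m A)
  obtain L Li \<alpha> S where L: "L \<in> carrier_mat (Suc m) (Suc m)" "Li \<in> carrier_mat (Suc m) (Suc m)"
    "L * Li = 1\<^sub>m (Suc m)" "Li * L = 1\<^sub>m (Suc m)" and \<alpha>: "\<alpha> > 0" and S: "pos_def_mat S m"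
    and LAL: "transpose_mat L * A * L = four_block_mat (mat 1 1 (\<lambda>_. \<alpha>)) (0\<^sub>m 1 m) (0\<^sub>m m 1) S"
    by (rule pos_def_pivot_elimination[OF Suc.prems])
  obtain R Ri where R: "R \<in> carrier_mat m m" "Ri \<in> carrier_mat m m" "R * Ri = 1\<^sub>m m"
    and SR: "S = transpose_mat R * R" using Suc.IH[OF S] by auto
  define T where "T = four_block_mat (mat 1 1 (\<lambda>_. sqrt \<alpha>)) (0\<^sub>m 1 m) (0\<^sub>m m 1) R"
  define Ti where "Ti = four_block_mat (mat 1 1 (\<lambda>_. 1 / sqrt \<alpha>)) (0\<^sub>m 1 m) (0\<^sub>m m 1) Ri"
  have T: "T \<in> carrier_mat (Suc m) (Suc m)" "Ti \<in> carrier_mat (Suc m) (Suc m)"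
    unfolding T_def Ti_def using R by auto
  have root: "mat 1 1 (\<lambda>_. sqrt \<alpha>) * mat 1 1 (\<lambda>_. 1 / sqrt \<alpha>) = 1\<^sub>m 1"
    "transpose_mat (mat 1 1 (\<lambda>_. sqrt \<alpha>)) * mat 1 1 (\<lambda>_. sqrt \<alpha>) = mat 1 1 (\<lambda>_. \<alpha>)"
    using \<alpha> by (auto intro!: eq_matI simp: scalar_prod_def)
  have TTi: "T * Ti = 1\<^sub>m (Suc m)"
    unfolding T_def Ti_def using R(1-3) root(1) four_block_one_mat[of 1 m]
    by (simp add: mult_four_block_mat[of _ 1 1 _ m _ m _ _ 1 _ m])
  have "transpose_mat T = four_block_mat (transpose_mat (mat 1 1 (\<lambda>_. sqrt \<alpha>))) (0\<^sub>m 1 m)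
      (0\<^sub>m m 1) (transpose_mat R)"
    unfolding T_def using R(1) by (simp add: transpose_four_block_mat[of _ 1 1 _ m _ m])
  then have "transpose_mat T * T = four_block_mat (mat 1 1 (\<lambda>_. \<alpha>)) (0\<^sub>m 1 m) (0\<^sub>m m 1) S"
    unfolding T_def SR using R(1) root(2)
    by (simp add: mult_four_block_mat[of _ 1 1 _ m _ m _ _ 1 _ m])
  then have "transpose_mat L * A * L = transpose_mat T * T" unfolding LAL by simp
  from congruence_transfers_factorization[OF pos_def_matD(1)[OF Suc.prems] L(1,2) T L(3,4) TTi this]
  moreover have "T * Li \<in> carrier_mat (Suc m) (Suc m)" "L * Ti \<in> carrier_mat (Suc m) (Suc m)"
    using T L by auto
  ultimately show ?case by blast
qed

text \<open>Positive definite matrices are invertible: \<open>(P\<^sup>T * P)\<^sup>-\<^sup>1 = P\<^sup>-\<^sup>1 * P\<^sup>-\<^sup>T\<close>.\<close>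

lemma pos_def_invertible:
  fixes A :: "real mat"
  assumes A: "pos_def_mat A n"
  obtains Ai where "Ai \<in> carrier_mat n n" "A * Ai = 1\<^sub>m n" "Ai * A = 1\<^sub>m n"
proof -
  obtain P Q where P: "P \<in> carrier_mat n n" and Q: "Q \<in> carrier_mat n n"
    and PQ: "P * Q = 1\<^sub>m n" and AP: "A = transpose_mat P * P"
    using pos_def_factorization[OF A] by auto
  have "transpose_mat P * transpose_mat Q = 1\<^sub>m n"
    using mat_mult_left_right_inverse[OF P Q PQ] P Q by (metis transpose_mult transpose_one)
  moreover have "A * (Q * transpose_mat Q) = transpose_mat P * (P * Q) * transpose_mat Q"
    unfolding AP using P Q by (simp add: assoc_mult_mat[of _ n n _ n _ n])
  ultimately have AAi: "A * (Q * transpose_mat Q) = 1\<^sub>m n"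
    using PQ P Q by simp
  have "Q * transpose_mat Q \<in> carrier_mat n n" using Q by auto
  with mat_mult_left_right_inverse[OF pos_def_matD(1)[OF A] this AAi] AAi show thesis
    using that by blast
qed

section \<open>Similarity to a symmetric matrix\<close>

lemma mat_inv_right_inverse:
  fixes M X :: "real mat"
  assumes M: "M \<in> carrier_mat n n" and X: "X \<in> carrier_mat n n" and MX: "M * X = 1\<^sub>m n"
  shows "invertible_mat M" and "mat_inv M = X"
proof -
  have XM: "X * M = 1\<^sub>m n" by (rule mat_mult_left_right_inverse[OF M X MX])
  show "invertible_mat M" unfolding invertible_mat_def inverts_mat_def
    using M X MX XM by (intro conjI exI[of _ X]) (auto simp: square_mat.simps)
  have "\<exists>N. N \<in> carrier_mat (dim_row M) (dim_row M) \<and>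
      M * N = 1\<^sub>m (dim_row M) \<and> N * M = 1\<^sub>m (dim_row M)"
    using M X MX XM by auto
  from someI_ex[OF this] M
  have Y: "mat_inv M \<in> carrier_mat n n" "mat_inv M * M = 1\<^sub>m n" unfolding mat_inv_def by auto
  have "mat_inv M = mat_inv M * (M * X)" using MX Y by simp
  also have "\<dots> = (mat_inv M * M) * X" by (rule assoc_mult_mat[symmetric, OF Y(1) M X])
  also have "\<dots> = X" using Y X by simp
  finally show "mat_inv M = X" .
qed

text \<open>If \<open>W * N\<close> is symmetric for a positive definite \<open>W = P\<^sup>T * P\<close>, then \<open>P * N * P\<^sup>-\<^sup>1\<close> is
  symmetric, so \<open>N\<close> is similar to a symmetric matrix.\<close>

lemma similar_sym_by_pos_def_symmetrizer:
  fixes N W :: "real mat"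
  assumes N: "N \<in> carrier_mat n n" and W: "pos_def_mat W n"
    and WN: "transpose_mat (W * N) = W * N"
  shows "\<exists>S. sym_mat S n \<and> similar_mat N S"
proof -
  obtain P Q where P: "P \<in> carrier_mat n n" and Q: "Q \<in> carrier_mat n n"
    and PQ: "P * Q = 1\<^sub>m n" and WP: "W = transpose_mat P * P"
    using pos_def_factorization[OF W] by auto
  have QP: "Q * P = 1\<^sub>m n" by (rule mat_mult_left_right_inverse[OF P Q PQ])
  have QtPt: "transpose_mat Q * transpose_mat P = 1\<^sub>m n"
    using PQ P Q by (metis transpose_mult transpose_one)
  define S where "S = P * N * Q"
  have Sc: "S \<in> carrier_mat n n" unfolding S_def using P N Q by auto
  have "transpose_mat Q * (W * N) * Q = (transpose_mat Q * transpose_mat P) * P * N * Q"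
    unfolding WP using P N Q by (simp add: assoc_mult_mat[of _ n n _ n _ n])
  then have S_cong: "S = transpose_mat Q * (W * N) * Q"
    unfolding QtPt S_def using P by simp
  have "transpose_mat S = transpose_mat Q * transpose_mat (W * N) * Q"
    unfolding S_cong using Q W N P WP
    by (simp add: transpose_mult[of _ n n _ n] assoc_mult_mat[of _ n n _ n _ n])
  then have "sym_mat S n" unfolding sym_mat_def WN S_cong[symmetric] using Sc by simp
  moreover have "N = Q * S * P"
  proof -
    have "Q * S * P = (Q * P) * N * (Q * P)"
      unfolding S_def using P N Q by (simp add: assoc_mult_mat[of _ n n _ n _ n])
    then show ?thesis using QP N by simp
  qed
  then have "similar_mat N S" using Sc N P Q PQ QP by (intro similar_matI[of _ _ Q P n]) auto
  ultimately show ?thesis by blast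
qed

lemma inverse_transpose_similar_sym:
  fixes M X W :: "real mat"
  assumes M: "M \<in> carrier_mat n n" and X: "X \<in> carrier_mat n n" and MX: "M * X = 1\<^sub>m n"
    and W: "pos_def_mat W n"
    and WN: "transpose_mat (W * (X * transpose_mat M)) = W * (X * transpose_mat M)"
  shows "invertible_mat M \<and> (\<exists>S. sym_mat S n \<and> similar_mat (mat_inv M * transpose_mat M) S)"
proof -
  have "X * transpose_mat M \<in> carrier_mat n n" using X M by auto
  then show ?thesis
    using mat_inv_right_inverse[OF M X MX] similar_sym_by_pos_def_symmetrizer[OF _ W WN] by simp
qed

text \<open>For \<open>M = K * G\<close> with an involution \<open>K\<close> and a positive definite \<open>G\<close>, the matrix
  \<open>M\<^sup>-\<^sup>1 * M\<^sup>T = G\<^sup>-\<^sup>1 * K * G * K\<^sup>T\<close> is symmetrized by \<open>G\<close>.\<close>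

lemma involution_times_pos_def:
  fixes K G M :: "real mat"
  assumes K: "K \<in> carrier_mat n n" and KK: "K * K = 1\<^sub>m n" and G: "pos_def_mat G n"
    and M: "M = K * G"
  shows "invertible_mat M \<and> (\<exists>S. sym_mat S n \<and> similar_mat (mat_inv M * transpose_mat M) S)"
proof -
  note Gc = pos_def_matD(1)[OF G] and Gt = pos_def_matD(2)[OF G]
  obtain Gi where Gi: "Gi \<in> carrier_mat n n" and GGi: "G * Gi = 1\<^sub>m n"
    using pos_def_invertible[OF G] by blast
  have Kt: "transpose_mat K \<in> carrier_mat n n" using K by simp
  have "M * (Gi * K) = K * (G * Gi) * K"
    unfolding M using K Gc Gi by (simp add: assoc_mult_mat[of _ n n _ n _ n])
  then have MX: "M * (Gi * K) = 1\<^sub>m n" using KK GGi K by simp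
  have "transpose_mat M = G * transpose_mat K"
    unfolding M using K Gc Gt by (simp add: transpose_mult[of _ n n _ n])
  then have "G * ((Gi * K) * transpose_mat M) = (G * Gi) * K * G * transpose_mat K"
    using K Kt Gc Gi by (simp add: assoc_mult_mat[of _ n n _ n _ n])
  then have "G * ((Gi * K) * transpose_mat M) = K * G * transpose_mat K"
    using GGi K Gc by simp
  moreover have "transpose_mat (K * G * transpose_mat K) = K * G * transpose_mat K"
    using K Gc Gt by (simp add: transpose_mult[of _ n n _ n] assoc_mult_mat[of _ n n _ n _ n])
  ultimately have "transpose_mat (G * ((Gi * K) * transpose_mat M)) = G * ((Gi * K) * transpose_mat M)"
    by simp
  moreover have "M \<in> carrier_mat n n" "Gi * K \<in> carrier_mat n n" using M K Gc Gi by auto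
  ultimately show ?thesis using inverse_transpose_similar_sym[OF _ _ MX G] by blast
qed

text \<open>For \<open>M = G * K\<close> the matrix \<open>M\<^sup>-\<^sup>1 * M\<^sup>T = K * G\<^sup>-\<^sup>1 * K\<^sup>T * G\<close> is symmetrized by the
  positive definite matrix \<open>K\<^sup>T * G * K\<close>, the product being \<open>G\<close> itself.\<close>

lemma pos_def_times_involution:
  fixes K G M :: "real mat"
  assumes K: "K \<in> carrier_mat n n" and KK: "K * K = 1\<^sub>m n" and G: "pos_def_mat G n"
    and M: "M = G * K"
  shows "invertible_mat M \<and> (\<exists>S. sym_mat S n \<and> similar_mat (mat_inv M * transpose_mat M) S)"
proof -
  note Gc = pos_def_matD(1)[OF G] and Gt = pos_def_matD(2)[OF G]
  obtain Gi where Gi: "Gi \<in> carrier_mat n n" and GGi: "G * Gi = 1\<^sub>m n"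
    using pos_def_invertible[OF G] by blast
  have Kt: "transpose_mat K \<in> carrier_mat n n" using K by simp
  have KtKt: "transpose_mat K * transpose_mat K = 1\<^sub>m n"
    using KK K by (metis transpose_mult transpose_one)
  have "M * (K * Gi) = G * (K * K) * Gi"
    unfolding M using K Gc Gi by (simp add: assoc_mult_mat[of _ n n _ n _ n])
  then have MX: "M * (K * Gi) = 1\<^sub>m n" using KK GGi K Gc by simp
  have W: "pos_def_mat (transpose_mat K * G * K) n"
    by (rule pos_def_congruence[OF G K K KK])
  have "transpose_mat K * G * K * ((K * Gi) * transpose_mat M)
      = transpose_mat K * G * (K * K) * Gi * transpose_mat K * G"
    unfolding M using K Kt Gc Gi Gt
    by (simp add: transpose_mult[of _ n n _ n] assoc_mult_mat[of _ n n _ n _ n])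
  also have "\<dots> = transpose_mat K * (G * Gi) * transpose_mat K * G"
    unfolding KK using K Kt Gc Gi by (simp add: assoc_mult_mat[of _ n n _ n _ n])
  also have "\<dots> = (transpose_mat K * transpose_mat K) * G"
    unfolding GGi using K Kt Gc by (simp add: assoc_mult_mat[of _ n n _ n _ n])
  also have "\<dots> = G" using KtKt Gc by simp
  finally have "transpose_mat (transpose_mat K * G * K * ((K * Gi) * transpose_mat M))
      = transpose_mat K * G * K * ((K * Gi) * transpose_mat M)"
    using Gt by simp
  moreover have "M \<in> carrier_mat n n" "K * Gi \<in> carrier_mat n n" using M K Gc Gi by auto
  ultimately show ?thesis using inverse_transpose_similar_sym[OF _ _ MX W] by blast
qed

section \<open>Block triangular matrices with definite diagonal blocks\<close>

text \<open>With \<open>G = diag(A, -B)\<close>, a block triangular \<open>M\<close> with diagonal blocks \<open>A\<close> and \<open>B\<close> is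
  \<open>K * G\<close> (lower triangular) or \<open>G * K\<close> (upper triangular) for a block triangular involution
  \<open>K\<close> with diagonal blocks \<open>1\<close> and \<open>-1\<close>.\<close>

lemma block_triangular_involution_factor:
  fixes A B H M :: "real mat"
  assumes A: "pos_def_mat A p" and B: "B \<in> carrier_mat q q"
    and M: "(H \<in> carrier_mat q p \<and> M = four_block_mat A (0\<^sub>m p q) H B) \<or>
      (H \<in> carrier_mat p q \<and> M = four_block_mat A H (0\<^sub>m q p) B)"
  defines "G \<equiv> four_block_mat A (0\<^sub>m p q) (0\<^sub>m q p) (- B)"
  shows "\<exists>K. K \<in> carrier_mat (p + q) (p + q) \<and> K * K = 1\<^sub>m (p + q) \<and> (M = K * G \<or> M = G * K)"
proof -
  note Ac = pos_def_matD(1)[OF A]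
  obtain Ai where Ai: "Ai \<in> carrier_mat p p" and AAi: "A * Ai = 1\<^sub>m p" and AiA: "Ai * A = 1\<^sub>m p"
    using pos_def_invertible[OF A] by blast
  have cancel: "X + - X = 0\<^sub>m q p" if "X \<in> carrier_mat q p" for X :: "real mat"
    using that by (auto intro!: eq_matI)
  have cancel': "X + - X = 0\<^sub>m p q" if "X \<in> carrier_mat p q" for X :: "real mat"
    using that by (auto intro!: eq_matI)
  have neg0: "- 0\<^sub>m p q = (0\<^sub>m p q :: real mat)" "- 0\<^sub>m q p = (0\<^sub>m q p :: real mat)"
    by (auto intro!: eq_matI)
  from M show ?thesis
  proof
    assume "H \<in> carrier_mat q p \<and> M = four_block_mat A (0\<^sub>m p q) H B"
    then have H: "H \<in> carrier_mat q p" and M: "M = four_block_mat A (0\<^sub>m p q) H B" by auto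
    define K where "K = four_block_mat (1\<^sub>m p) (0\<^sub>m p q) (H * Ai) (- 1\<^sub>m q)"
    have "K * K = 1\<^sub>m (p + q)"
      unfolding K_def using H Ai four_block_one_mat[of p q] cancel[of "H * Ai"] neg0
      by (simp add: mult_four_block_mat[of _ p p _ q _ q _ _ p _ q])
    moreover have "M = K * G"
      unfolding K_def G_def M using H Ai Ac B AiA neg0
      by (simp add: mult_four_block_mat[of _ p p _ q _ q _ _ p _ q] assoc_mult_mat[of _ q p _ p _ p])
    moreover have "K \<in> carrier_mat (p + q) (p + q)" unfolding K_def using H Ai by auto
    ultimately show ?thesis by blast
  next
    assume "H \<in> carrier_mat p q \<and> M = four_block_mat A H (0\<^sub>m q p) B"
    then have H: "H \<in> carrier_mat p q" and M: "M = four_block_mat A H (0\<^sub>m q p) B" by auto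
    define K where "K = four_block_mat (1\<^sub>m p) (Ai * H) (0\<^sub>m q p) (- 1\<^sub>m q)"
    have "K * K = 1\<^sub>m (p + q)"
      unfolding K_def using H Ai four_block_one_mat[of p q] cancel'[of "Ai * H"] neg0
      by (simp add: mult_four_block_mat[of _ p p _ q _ q _ _ p _ q])
    moreover have "M = G * K"
      unfolding K_def G_def M using H Ai Ac B AAi neg0
      by (simp add: mult_four_block_mat[of _ p p _ q _ q _ _ p _ q]
          assoc_mult_mat[of _ p p _ p _ q, symmetric])
    moreover have "K \<in> carrier_mat (p + q) (p + q)" unfolding K_def using H Ai by auto
    ultimately show ?thesis by blast
  qed
qed

theorem proposition4p9:
  fixes p q :: nat and A B H M :: "real mat"
  assumes "p \<ge> 1" and "q \<ge> 1"
    and "pos_def_mat A p" and "neg_def_mat B q"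
    and "(H \<in> carrier_mat q p \<and> M = four_block_mat A (0\<^sub>m p q) H B) \<or>
         (H \<in> carrier_mat p q \<and> M = four_block_mat A H (0\<^sub>m q p) B)"
  shows "invertible_mat M \<and>
         (\<exists>S. sym_mat S (p + q) \<and> similar_mat (mat_inv M * transpose_mat M) S) \<and>
         (\<forall>z::complex. poly (map_poly complex_of_real (char_poly (mat_inv M * transpose_mat M))) z = 0
              \<longrightarrow> z \<in> \<real>)"
proof -
  let ?G = "four_block_mat A (0\<^sub>m p q) (0\<^sub>m q p) (- B)"
  have negB: "pos_def_mat (- B) q" by (rule neg_def_uminus_pos_def[OF assms(4)])
  then have G: "pos_def_mat ?G (p + q)" by (rule pos_def_block_diag[OF assms(3)])
  have "B \<in> carrier_mat q q" using pos_def_matD(1)[OF negB] by simp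
  then obtain K where K: "K \<in> carrier_mat (p + q) (p + q)" "K * K = 1\<^sub>m (p + q)"
    and M: "M = K * ?G \<or> M = ?G * K"
    using block_triangular_involution_factor[OF assms(3) _ assms(5)] by blast
  have similar: "invertible_mat M \<and>
      (\<exists>S. sym_mat S (p + q) \<and> similar_mat (mat_inv M * transpose_mat M) S)"
    using M involution_times_pos_def[OF K G] pos_def_times_involution[OF K G] by blast
  then obtain S where S: "sym_mat S (p + q)" and sim: "similar_mat (mat_inv M * transpose_mat M) S"
    by blast
  from sim have "char_poly (mat_inv M * transpose_mat M) = char_poly S" by (rule char_poly_similar)
  then show ?thesis using similar sym_mat_real_eigenvalues[OF S] by auto
qed

end
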